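(* For all integers $i$ and $k$ such that $k+3\leq i\leq 2k+2$, we have $R_k^{\mathcal{SP}}(i,i)=3i-2k-4$, where $\mathcal{SP}$ is the class of split graphs.
   Context: All graphs are finite and simple. For a graph $G$ and a nonnegative integer $k$, a $k$-sparse $j$-set is a set of $j$ vertices of $G$ inducing a subgraph of maximum degree at most $k$; a $k$-dense $i$-set is a set of $i$ vertices of $G$ that is $k$-sparse in the complement of $G$. For a graph class $\mathcal{G}$, $R_k^{\mathcal{G}}(i,j)$ is the smallest natural number $n$ such that every graph on $n$ vertices in $\mathcal{G}$ has either a $k$-dense $i$-set or a $k$-sparse $j$-set. A split graph is a graph whose vertex set can be partitioned into a clique and an independent set. *)

theory Defs
  imports Main
begin

text \<open>A finite simple graph: finite vertex set V (of naturals) and an edge relation E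
  that is symmetric and irreflexive on V. Only the restriction of E to V matters.\<close>
definition simple_graph :: "nat set \<Rightarrow> (nat \<Rightarrow> nat \<Rightarrow> bool) \<Rightarrow> bool" where
  "simple_graph V E \<longleftrightarrow> finite V \<and> (\<forall>u\<in>V. \<forall>v\<in>V. E u v \<longleftrightarrow> E v u) \<and> (\<forall>v\<in>V. \<not> E v v)"

definition max_deg_le :: "(nat \<Rightarrow> nat \<Rightarrow> bool) \<Rightarrow> nat set \<Rightarrow> nat \<Rightarrow> bool" where
  "max_deg_le E S k \<longleftrightarrow> (\<forall>v\<in>S. card {u\<in>S. E v u} \<le> k)"

definition compl_edges :: "(nat \<Rightarrow> nat \<Rightarrow> bool) \<Rightarrow> nat \<Rightarrow> nat \<Rightarrow> bool" where
  "compl_edges E u v \<longleftrightarrow> u \<noteq> v \<and> \<not> E u v"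

definition k_sparse_set :: "nat set \<Rightarrow> (nat \<Rightarrow> nat \<Rightarrow> bool) \<Rightarrow> nat \<Rightarrow> nat \<Rightarrow> nat set \<Rightarrow> bool" where
  "k_sparse_set V E k j S \<longleftrightarrow> S \<subseteq> V \<and> card S = j \<and> max_deg_le E S k"

definition k_dense_set :: "nat set \<Rightarrow> (nat \<Rightarrow> nat \<Rightarrow> bool) \<Rightarrow> nat \<Rightarrow> nat \<Rightarrow> nat set \<Rightarrow> bool" where
  "k_dense_set V E k i S \<longleftrightarrow> k_sparse_set V (compl_edges E) k i S"

definition split_graph :: "nat set \<Rightarrow> (nat \<Rightarrow> nat \<Rightarrow> bool) \<Rightarrow> bool" where
  "split_graph V E \<longleftrightarrow> simple_graph V E \<and>
     (\<exists>C I. C \<union> I = V \<and> C \<inter> I = {} \<and>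
        (\<forall>u\<in>C. \<forall>v\<in>C. u \<noteq> v \<longrightarrow> E u v) \<and>
        (\<forall>u\<in>I. \<forall>v\<in>I. \<not> E u v))"

definition ramsey_class :: "(nat set \<Rightarrow> (nat \<Rightarrow> nat \<Rightarrow> bool) \<Rightarrow> bool) \<Rightarrow> nat \<Rightarrow> nat \<Rightarrow> nat \<Rightarrow> nat" where
  "ramsey_class P k i j = (LEAST n. \<forall>V E. simple_graph V E \<and> P V E \<and> card V = n \<longrightarrow>
      (\<exists>S. k_dense_set V E k i S) \<or> (\<exists>S. k_sparse_set V E k j S))"

end

theory Submission
  imports Defs
begin

text \<open>Write \<open>i = k + 3 + s\<close>. Let a split graph on \<open>k + 5 + 3s\<close> vertices, with clique \<open>C\<close> and
  independent set \<open>I\<close>, have no \<open>k\<close>-dense and no \<open>k\<close>-sparse \<open>i\<close>-set; then \<open>|C|, |I| < i\<close>.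
  Adding to \<open>I\<close> any \<open>i - |I|\<close> clique vertices that each miss more than \<open>s + 1\<close> vertices of \<open>I\<close>
  would give a \<open>k\<close>-sparse \<open>i\<close>-set, so at least \<open>2s + 3\<close> clique vertices miss at most \<open>s + 1\<close>
  vertices of \<open>I\<close>; in the complement the same argument gives \<open>2s + 3\<close> vertices of \<open>I\<close> that see
  at most \<open>s + 1\<close> clique vertices. Counting the edges between \<open>2s + 3\<close> vertices of each kind
  yields \<open>(2s + 3)(s + 2) \<le> (2s + 3)(s + 1)\<close>.

  For the lower bound, an \<open>i\<close>-set in the graph \<open>extremal_split_edges\<close> on \<open>k + 4 + 3s\<close> vertices,
  or in any induced subgraph of it, contains a clique vertex and a vertex of \<open>I\<^sub>1 \<union> I\<^sub>2\<close>,
  because the independent set and \<open>C\<^sub>1 \<union> C\<^sub>2 \<union> I\<^sub>0\<close> have only \<open>k + s + 2\<close> vertices each. A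
  clique vertex misses at most \<open>s + 2\<close> vertices of the set (itself included) and a vertex of
  \<open>I\<^sub>1 \<union> I\<^sub>2\<close> sees at most \<open>s + 1\<close>, so the set has a vertex of degree, respectively
  co-degree, at least \<open>k + 1\<close>.\<close>

lemma simple_graph_compl_edges:
  assumes "simple_graph V E"
  shows "simple_graph V (compl_edges E)"
  using assms unfolding simple_graph_def compl_edges_def by blast

lemma card_independent_lt_if_no_k_sparse_set:
  assumes "I \<subseteq> V" and "\<forall>u\<in>I. \<forall>v\<in>I. \<not> E u v"
    and "\<nexists>S. k_sparse_set V E k i S"
  shows "card I < i"
proof (rule ccontr)
  assume "\<not> card I < i"
  then obtain S where "S \<subseteq> I" "card S = i"
    by (metis not_less obtain_subset_with_card_n)
  moreover have "max_deg_le E S k"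
    unfolding max_deg_le_def
  proof
    fix v assume "v \<in> S"
    then have "{u\<in>S. E v u} = {}" using \<open>S \<subseteq> I\<close> assms(2) by blast
    then show "card {u\<in>S. E v u} \<le> k" by (metis card.empty zero_le)
  qed
  ultimately have "k_sparse_set V E k i S"
    using assms(1) unfolding k_sparse_set_def by auto
  with assms(3) show False by blast
qed

lemma card_clique_lt_if_no_k_dense_set:
  assumes "C \<subseteq> V" and "\<forall>u\<in>C. \<forall>v\<in>C. u \<noteq> v \<longrightarrow> E u v"
    and "\<nexists>S. k_dense_set V E k i S"
  shows "card C < i"
  using assms card_independent_lt_if_no_k_sparse_set[of C V "compl_edges E" k i]
  unfolding k_dense_set_def compl_edges_def by blast

lemma card_vertices_with_few_non_neighbours_in_independent_set:
  assumes graph: "simple_graph V E"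
    and part: "C \<union> I = V" "C \<inter> I = {}"
    and indep: "\<forall>u\<in>I. \<forall>v\<in>I. \<not> E u v"
    and no_sparse: "\<nexists>S. k_sparse_set V E k i S"
    and I_le: "card I \<le> i" "i \<le> card I + k" and d: "i \<le> d + k + 2"
  shows "card C + card I < i + card {x\<in>C. card {y\<in>I. \<not> E x y} \<le> d}"
proof (rule ccontr)
  define A where "A = {x\<in>C. card {y\<in>I. \<not> E x y} \<le> d}"
  assume "\<not> card C + card I < i + card {x\<in>C. card {y\<in>I. \<not> E x y} \<le> d}"
  then have A_small: "card A + i \<le> card C + card I" unfolding A_def by simp
  have fin: "finite C" "finite I"
    using graph part(1) unfolding simple_graph_def by auto
  have "card (C - A) = card C - card A"
    by (simp add: A_def card_Diff_subset fin)
  then have "i - card I \<le> card (C - A)" using A_small I_le by linarith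
  then obtain T where T: "T \<subseteq> C - A" "card T = i - card I"
    using obtain_subset_with_card_n by metis
  have fin_T: "finite T" using T(1) fin(1) finite_subset by blast
  have TI: "T \<inter> I = {}" using T(1) part(2) by blast
  have "k_sparse_set V E k i (T \<union> I)"
    unfolding k_sparse_set_def max_deg_le_def
  proof (intro conjI ballI)
    show "T \<union> I \<subseteq> V" using T(1) part(1) by blast
    show "card (T \<union> I) = i" using card_Un_disjoint[OF fin_T fin(2) TI] T(2) I_le by simp
  next
    fix v assume v: "v \<in> T \<union> I"
    show "card {u \<in> T \<union> I. E v u} \<le> k"
    proof (cases "v \<in> T")
      case True
      then have "v \<in> V" "d < card {y\<in>I. \<not> E v y}"
        using T(1) part(1) unfolding A_def by auto
      have "{y\<in>I. E v y} = I - {y\<in>I. \<not> E v y}" by blast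
      then have card_nbrs_I: "card {y\<in>I. E v y} = card I - card {y\<in>I. \<not> E v y}"
        using fin(2) by (simp add: card_Diff_subset)
      have "{u \<in> T \<union> I. E v u} \<subseteq> (T - {v}) \<union> {y\<in>I. E v y}"
        using graph \<open>v \<in> V\<close> unfolding simple_graph_def by blast
      then have "card {u \<in> T \<union> I. E v u} \<le> card ((T - {v}) \<union> {y\<in>I. E v y})"
        using fin(2) fin_T by (intro card_mono) auto
      also have "\<dots> \<le> card (T - {v}) + card {y\<in>I. E v y}"
        by (rule card_Un_le)
      finally have "card {u \<in> T \<union> I. E v u} \<le> card (T - {v}) + card {y\<in>I. E v y}" .
      moreover have "card {y\<in>I. \<not> E v y} \<le> card I" using fin(2) by (simp add: card_mono)
      moreover have "0 < card T" using True fin_T card_gt_0_iff by blast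
      ultimately show ?thesis
        using card_nbrs_I True T(2) fin_T \<open>d < card {y\<in>I. \<not> E v y}\<close> I_le d by simp
    next
      case False
      then have "{u \<in> T \<union> I. E v u} \<subseteq> T" using v indep by blast
      then have "card {u \<in> T \<union> I. E v u} \<le> card T" by (rule card_mono[OF fin_T])
      then show ?thesis using T(2) I_le by linarith
    qed
  qed
  with no_sparse show False by blast
qed

lemma le_twice_of_bipartite_degree_bounds:
  fixes R :: "'a \<Rightarrow> 'b \<Rightarrow> bool"
  assumes "finite A" "finite B" "m \<le> card A" "m \<le> card B"
    and A_deg: "\<And>x. x \<in> A \<Longrightarrow> card {y\<in>B. \<not> R x y} \<le> q"
    and B_deg: "\<And>y. y \<in> B \<Longrightarrow> card {x\<in>A. R x y} \<le> q"
  shows "m \<le> 2 * q"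
proof -
  obtain A' B' where A': "A' \<subseteq> A" "card A' = m" and B': "B' \<subseteq> B" "card B' = m"
    using assms(3,4) obtain_subset_with_card_n by metis
  have fin: "finite A'" "finite B'"
    using A'(1) B'(1) assms(1,2) finite_subset by blast+
  have "m - q \<le> card {y\<in>B'. R x y}" if "x \<in> A'" for x
  proof -
    have "card {y\<in>B'. \<not> R x y} \<le> card {y\<in>B. \<not> R x y}"
      using B'(1) assms(2) by (intro card_mono) auto
    moreover have "B' = {y\<in>B'. R x y} \<union> {y\<in>B'. \<not> R x y}" by blast
    then have "card B' \<le> card {y\<in>B'. R x y} + card {y\<in>B'. \<not> R x y}"
      by (metis card_Un_le)
    moreover have "x \<in> A" using that A'(1) by blast
    ultimately show ?thesis using A_deg[of x] B'(2) by linarith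
  qed
  then have "m * (m - q) \<le> (\<Sum>x\<in>A'. card {y\<in>B'. R x y})"
    using sum_bounded_below[of A' "m - q"] A'(2) by simp
  also have "\<dots> = (\<Sum>y\<in>B'. card {x\<in>A'. R x y})"
    by (rule sum_multicount_gen) (use fin in auto)
  also have "\<dots> \<le> m * q"
  proof -
    have "card {x\<in>A'. R x y} \<le> q" if "y \<in> B'" for y
    proof -
      have "card {x\<in>A'. R x y} \<le> card {x\<in>A. R x y}"
        using A'(1) assms(1) by (intro card_mono) auto
      then show ?thesis using B_deg[of y] that B'(1) by auto
    qed
    then show ?thesis using sum_bounded_above[of B' _ q] B'(2) by simp
  qed
  finally have "m * (m - q) \<le> m * q" .
  then show ?thesis by (cases "m = 0") auto
qed

lemma split_graph_has_k_dense_or_k_sparse_set: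
  assumes split: "split_graph V E" and card_V: "card V = k + 5 + 3 * s"
  shows "(\<exists>S. k_dense_set V E k (k + 3 + s) S) \<or> (\<exists>S. k_sparse_set V E k (k + 3 + s) S)"
proof (rule ccontr)
  let ?i = "k + 3 + s"
  assume "\<not> ?thesis"
  then have no_dense: "\<nexists>S. k_dense_set V E k ?i S"
    and no_sparse: "\<nexists>S. k_sparse_set V E k ?i S" by auto
  from split obtain C I where graph: "simple_graph V E"
    and part: "C \<union> I = V" "C \<inter> I = {}"
    and clique: "\<forall>u\<in>C. \<forall>v\<in>C. u \<noteq> v \<longrightarrow> E u v"
    and indep: "\<forall>u\<in>I. \<forall>v\<in>I. \<not> E u v"
    unfolding split_graph_def by blast
  have fin: "finite C" "finite I"
    using graph part(1) unfolding simple_graph_def by auto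
  have card_CI: "card C + card I = k + 5 + 3 * s"
    using card_Un_disjoint[OF fin part(2)] part(1) card_V by simp
  have "card C < ?i"
    using card_clique_lt_if_no_k_dense_set[OF _ clique no_dense] part(1) by blast
  moreover have "card I < ?i"
    using card_independent_lt_if_no_k_sparse_set[OF _ indep no_sparse] part(1) by blast
  ultimately have card_bounds: "card I \<le> ?i" "?i \<le> card I + k" "card C \<le> ?i" "?i \<le> card C + k"
    using card_CI by linarith+
  define A where "A = {x\<in>C. card {y\<in>I. \<not> E x y} \<le> s + 1}"
  define B where "B = {y\<in>I. card {x\<in>C. E x y} \<le> s + 1}"
  have "card C + card I < ?i + card A"
    unfolding A_def
    by (rule card_vertices_with_few_non_neighbours_in_independent_set
        [OF graph part indep no_sparse card_bounds(1,2)]) simp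
  moreover have "card I + card C < ?i + card B"
  proof -
    have "{x\<in>C. \<not> compl_edges E y x} = {x\<in>C. E x y}" if "y \<in> I" for y
      using that part graph unfolding compl_edges_def simple_graph_def by blast
    then have "B = {y\<in>I. card {x\<in>C. \<not> compl_edges E y x} \<le> s + 1}"
      unfolding B_def by auto
    \<comment> \<open>In the complement \<open>C\<close> is independent and non-neighbours become neighbours.\<close>
    also have "card I + card C < ?i + card \<dots>"
      by (rule card_vertices_with_few_non_neighbours_in_independent_set
          [OF simple_graph_compl_edges[OF graph]])
        (use part clique no_dense card_bounds(3,4) in \<open>auto simp: compl_edges_def k_dense_set_def\<close>)
    finally show ?thesis .
  qed
  ultimately have "2 * s + 3 \<le> card A" "2 * s + 3 \<le> card B"
    using card_CI by linarith+
  moreover have "finite A" "finite B" using fin unfolding A_def B_def by auto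
  moreover have "card {x\<in>A. E x y} \<le> s + 1" if "y \<in> B" for y
  proof -
    have "card {x\<in>A. E x y} \<le> card {x\<in>C. E x y}"
      using fin(1) unfolding A_def by (intro card_mono) auto
    then show ?thesis using that unfolding B_def by simp
  qed
  moreover have "card {y\<in>B. \<not> E x y} \<le> s + 1" if "x \<in> A" for x
  proof -
    have "card {y\<in>B. \<not> E x y} \<le> card {y\<in>I. \<not> E x y}"
      using fin(2) unfolding B_def by (intro card_mono) auto
    then show ?thesis using that unfolding A_def by simp
  qed
  ultimately have "2 * s + 3 \<le> 2 * (s + 1)"
    using le_twice_of_bipartite_degree_bounds[of A B "2 * s + 3" E "s + 1"] by blast
  then show False by simp
qed

lemma not_max_deg_le_if_few_non_neighbours:
  assumes "finite S" "x \<in> S" "finite N" "k + card N + 2 \<le> card S"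
    and "\<forall>u\<in>S - N. u \<noteq> x \<longrightarrow> E x u"
  shows "\<not> max_deg_le E S k"
proof
  assume deg: "max_deg_le E S k"
  have "card S \<le> card ((S - N - {x}) \<union> (N \<union> {x}))"
    using assms(1,3) by (intro card_mono) auto
  also have "\<dots> \<le> card (S - N - {x}) + card (N \<union> {x})"
    by (rule card_Un_le)
  also have "card (N \<union> {x}) \<le> card N + 1"
    using assms(3) by (simp add: card_insert_if)
  finally have "card S \<le> card (S - N - {x}) + card N + 1" by simp
  moreover have "card (S - N - {x}) \<le> card {u\<in>S. E x u}"
    using assms(1,5) by (intro card_mono) auto
  moreover have "card {u\<in>S. E x u} \<le> k"
    using deg assms(2) unfolding max_deg_le_def by blast
  ultimately show False using assms(4) by linarith
qed

lemma no_k_sparse_set_if_few_non_neighbours: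
  assumes "finite V" "finite J" "card J < i"
    and non_nbrs: "\<And>x. x \<in> V - J \<Longrightarrow>
      finite (N x) \<and> k + card (N x) + 2 \<le> i \<and> (\<forall>u\<in>V - N x. u \<noteq> x \<longrightarrow> E x u)"
  shows "\<not> k_sparse_set V E k i S"
proof
  assume "k_sparse_set V E k i S"
  then have S: "S \<subseteq> V" "card S = i" "max_deg_le E S k"
    unfolding k_sparse_set_def by auto
  have "\<not> S \<subseteq> J"
    using card_mono[OF assms(2), of S] S(2) assms(3) by linarith
  then obtain x where "x \<in> S" "x \<in> V - J" using S(1) by blast
  moreover have "finite S" using S(1) assms(1) finite_subset by blast
  ultimately show False
    using not_max_deg_le_if_few_non_neighbours[of S x "N x" k E] non_nbrs[of x] S by blast
qed

text \<open>The clique is \<open>C\<^sub>1 \<union> C\<^sub>2\<close> with \<open>C\<^sub>1 = {..<m}\<close>, \<open>C\<^sub>2 = {m..<2m}\<close>; the independent set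
  is \<open>I\<^sub>1 = {2m..<3m}\<close>, \<open>I\<^sub>2 = {3m..<4m}\<close> and \<open>I\<^sub>0 = {4m..}\<close>. \<open>C\<^sub>1\<close> is joined to \<open>I\<^sub>0 \<union> I\<^sub>1\<close>
  and \<open>C\<^sub>2\<close> to \<open>I\<^sub>0 \<union> I\<^sub>2\<close>.\<close>
definition extremal_split_edges :: "nat \<Rightarrow> nat \<Rightarrow> nat \<Rightarrow> bool" where
  "extremal_split_edges m u v \<longleftrightarrow> u \<noteq> v \<and>
     (u < 2*m \<and> v < 2*m
      \<or> u < m \<and> 2*m \<le> v \<and> \<not> (3*m \<le> v \<and> v < 4*m)
      \<or> v < m \<and> 2*m \<le> u \<and> \<not> (3*m \<le> u \<and> u < 4*m)
      \<or> m \<le> u \<and> u < 2*m \<and> 3*m \<le> v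
      \<or> m \<le> v \<and> v < 2*m \<and> 3*m \<le> u)"

lemma split_graph_extremal_split_edges:
  assumes "finite V"
  shows "split_graph V (extremal_split_edges m)"
  unfolding split_graph_def
proof (intro conjI exI)
  show "simple_graph V (extremal_split_edges m)"
    using assms unfolding simple_graph_def extremal_split_edges_def by blast
  show "V \<inter> {..<2*m} \<union> (V - {..<2*m}) = V" "V \<inter> {..<2*m} \<inter> (V - {..<2*m}) = {}"
    by auto
  show "\<forall>u\<in>V \<inter> {..<2*m}. \<forall>v\<in>V \<inter> {..<2*m}. u \<noteq> v \<longrightarrow> extremal_split_edges m u v"
    unfolding extremal_split_edges_def by auto
  show "\<forall>u\<in>V - {..<2*m}. \<forall>v\<in>V - {..<2*m}. \<not> extremal_split_edges m u v"
    unfolding extremal_split_edges_def by auto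
qed

lemma extremal_split_edges_no_k_sparse_set:
  assumes "V \<subseteq> {..<k + 4 + 3*s}"
  shows "\<not> k_sparse_set V (extremal_split_edges (s + 1)) k (k + 3 + s) S"
proof -
  define N where "N x = (if x < s + 1 then {3*(s+1)..<4*(s+1)} else {2*(s+1)..<3*(s+1)})" for x
  have "x < 2*(s+1) \<Longrightarrow> u \<notin> N x \<Longrightarrow> u \<noteq> x \<Longrightarrow> extremal_split_edges (s + 1) x u" for x u
    unfolding N_def extremal_split_edges_def by (auto split: if_splits)
  moreover have "finite V" using assms finite_subset by blast
  ultimately show ?thesis
    using assms by (intro no_k_sparse_set_if_few_non_neighbours[where J = "{2*(s+1)..<k + 4 + 3*s}" and N = N])
      (auto simp: N_def)
qed

lemma extremal_split_edges_no_k_dense_set: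
  assumes "s \<le> k" "V \<subseteq> {..<k + 4 + 3*s}"
  shows "\<not> k_dense_set V (extremal_split_edges (s + 1)) k (k + 3 + s) S"
proof -
  define J where "J = {..<2*(s+1)} \<union> {4*(s+1)..<k + 4 + 3*s}"
  define N where "N x = (if x < 3*(s+1) then {..<s+1} else {s+1..<2*(s+1)})" for x
  have "card J < k + 3 + s"
    unfolding J_def using assms(1) by (subst card_Un_disjoint) auto
  moreover have "x \<notin> J \<Longrightarrow> x \<in> V \<Longrightarrow> u \<notin> N x \<Longrightarrow> u \<noteq> x
      \<Longrightarrow> compl_edges (extremal_split_edges (s + 1)) x u" for x u
    using assms(2) unfolding J_def N_def extremal_split_edges_def compl_edges_def by (auto split: if_splits)
  moreover have "finite V" using assms(2) finite_subset by blast
  ultimately show ?thesis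
    unfolding k_dense_set_def
    by (intro no_k_sparse_set_if_few_non_neighbours[where J = J and N = N])
      (auto simp: J_def N_def)
qed

theorem theorem6p3:
  fixes i k :: nat
  assumes "k + 3 \<le> i" and "i \<le> 2 * k + 2"
  shows "ramsey_class split_graph k i i = 3 * i - 2 * k - 4"
proof -
  define s where "s = i - k - 3"
  have i: "i = k + 3 + s" and "s \<le> k" using assms unfolding s_def by auto
  have bound_eq: "3 * i - 2 * k - 4 = k + 5 + 3 * s" using i by simp
  show ?thesis
    unfolding ramsey_class_def bound_eq
  proof (rule Least_equality)
    show "\<forall>V E. simple_graph V E \<and> split_graph V E \<and> card V = k + 5 + 3 * s \<longrightarrow>
        (\<exists>S. k_dense_set V E k i S) \<or> (\<exists>S. k_sparse_set V E k i S)"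
      unfolding i using split_graph_has_k_dense_or_k_sparse_set by blast
  next
    fix n
    assume all_graphs: "\<forall>V E. simple_graph V E \<and> split_graph V E \<and> card V = n \<longrightarrow>
        (\<exists>S. k_dense_set V E k i S) \<or> (\<exists>S. k_sparse_set V E k i S)"
    show "k + 5 + 3 * s \<le> n"
    proof (rule ccontr)
      assume "\<not> k + 5 + 3 * s \<le> n"
      then have small: "{..<n} \<subseteq> {..<k + 4 + 3 * s}" by auto
      have split: "split_graph {..<n} (extremal_split_edges (s + 1))"
        by (rule split_graph_extremal_split_edges) simp
      then have "simple_graph {..<n} (extremal_split_edges (s + 1))"
        unfolding split_graph_def by blast
      with split all_graphs
      have "(\<exists>S. k_dense_set {..<n} (extremal_split_edges (s + 1)) k i S)
          \<or> (\<exists>S. k_sparse_set {..<n} (extremal_split_edges (s + 1)) k i S)"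
        by simp
      then show False
        unfolding i using extremal_split_edges_no_k_dense_set[OF \<open>s \<le> k\<close> small]
          extremal_split_edges_no_k_sparse_set[OF small] by blast
    qed
  qed
qed

end
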